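(* Let $n\ge 1$ and $x,y\in S_n$. Then there exist an integer $N\geq n$ and permutations $v,w\in S_N$ such that $P(v)=P(w)$, $v(i)=w(i)$ for all $i\leq N-n$, and the pattern of $v$ in the last $n$ positions is $x$ and the pattern of $w$ in the last $n$ positions is $y$.
   Context: Permutations are written in one-line notation. $P(w)$ denotes the Robinson--Schensted insertion tableau of $w\in S_N$, obtained by successively column inserting $w(N),w(N-1),\dots,w(1)$ into the empty tableau (column insertion of $a$: place $a$ in the first column, bumping the smallest entry of that column larger than $a$, if any, which is then inserted into the next column in the same way, and so on). For $x\in S_n$ and $v\in S_N$ with $n\le N$, the pattern of $v$ in the last $n$ positions is $x$ if for all $1\le i<j\le n$: $v(N-n+i)<v(N-n+j)$ if and only if $x(i)<x(j)$. *)

theory Defs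
  imports Main
begin

text \<open>Permutations of {1..N} in one-line notation, as lists: the list
  [w(1), ..., w(N)].\<close>
definition is_perm :: "nat \<Rightarrow> nat list \<Rightarrow> bool" where
  "is_perm N w \<longleftrightarrow> distinct w \<and> set w = {1..N}"

text \<open>Tableaux as lists of columns (each column listed top to bottom).\<close>
fun col_ins :: "nat \<Rightarrow> nat list list \<Rightarrow> nat list list" where
  "col_ins a [] = [[a]]"
| "col_ins a (c # cs) =
     (if \<exists>b\<in>set c. a < b
      then (let b = Min {b \<in> set c. a < b}
            in map (\<lambda>z. if z = b then a else z) c # col_ins b cs)
      else (c @ [a]) # cs)"

definition P_tab :: "nat list \<Rightarrow> nat list list" where
  "P_tab w = foldr col_ins w []"

text \<open>The pattern of v in its last n = length x positions is x
  (0-indexed lists: position N-n+i+1 in 1-indexed notation is index N-n+i).\<close>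
definition pattern_last :: "nat list \<Rightarrow> nat list \<Rightarrow> bool" where
  "pattern_last x v \<longleftrightarrow> length x \<le> length v \<and>
     (\<forall>i j. i < j \<and> j < length x \<longrightarrow>
        (v ! (length v - length x + i) < v ! (length v - length x + j) \<longleftrightarrow> x ! i < x ! j))"

end

theory Submission
  imports Defs
begin

text \<open>
  Knuth-equivalent words have the same insertion tableau: replacing three consecutive letters
  by a Knuth-related triple does not change the column obtained by inserting them into the first
  column, and changes the word bumped into the next column by at most another Knuth relation.

  Let T be the staircase tableau whose column j holds j n + 1, ..., j n + (n - j), and let U be
  the row reading word of T with the least entry of every column removed. Appending the removed
  entries to U in any order corresponds to row-inserting them, and each insertion just pushes its
  own column back down by one cell, so every such word is Knuth equivalent to the reading word of
  T. The appended letters can thus realise any pattern x or y. Prefixing both words with the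
  values up to n^2 that they do not use turns them into permutations.
\<close>

section \<open>Column insertion into a single column\<close>

definition col_bump :: "nat \<Rightarrow> nat set \<Rightarrow> nat set \<times> nat list" where
  "col_bump a C =
     (if \<exists>b\<in>C. a < b then (insert a (C - {Min {b\<in>C. a < b}}), [Min {b\<in>C. a < b}])
      else (insert a C, []))"

lemma col_bump_eqI:
  assumes "finite C" "m \<in> C" "a < m" "\<And>b. b \<in> C \<Longrightarrow> a < b \<Longrightarrow> m \<le> b"
  shows "col_bump a C = (insert a (C - {m}), [m])"
proof -
  have "Min {b\<in>C. a < b} = m"
    using assms by (intro Min_eqI) auto
  with assms show ?thesis
    unfolding col_bump_def by auto
qed

lemma col_bump_largest:
  assumes "\<And>b. b \<in> C \<Longrightarrow> \<not> a < b"
  shows "col_bump a C = (insert a C, [])"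
  using assms unfolding col_bump_def by auto

lemma least_above:
  fixes C :: "nat set"
  assumes "b \<in> C" "a < b"
  obtains m where "m \<in> C" "a < m" "\<And>b. b \<in> C \<Longrightarrow> a < b \<Longrightarrow> m \<le> b"
  using assms LeastI[of "\<lambda>b. b \<in> C \<and> a < b"] Least_le[of "\<lambda>b. b \<in> C \<and> a < b"] by blast

lemma col_bump_cases:
  assumes "finite C"
  obtains "\<And>b. b \<in> C \<Longrightarrow> \<not> a < b" "col_bump a C = (insert a C, [])"
  | m where "m \<in> C" "a < m" "\<And>b. b \<in> C \<Longrightarrow> a < b \<Longrightarrow> m \<le> b"
      "col_bump a C = (insert a (C - {m}), [m])"
  by (metis assms col_bump_eqI col_bump_largest least_above)

lemma col_bump_subset:
  assumes "finite C"
  shows "fst (col_bump a C) \<subseteq> insert a C" "set (snd (col_bump a C)) \<subseteq> C"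
  by (cases rule: col_bump_cases[OF assms, of a]; auto)+

lemma sorted_list_of_set_strict:
  "sorted_wrt (<) xs \<Longrightarrow> sorted_list_of_set (set xs) = xs"
  by (simp add: sorted_list_of_set.idem_if_sorted_distinct strict_sorted_iff)

lemma col_ins_eq_col_bump:
  assumes "sorted_wrt (<) c" "a \<notin> set c"
  shows "col_ins a (c # cs) =
    sorted_list_of_set (fst (col_bump a (set c))) # foldr col_ins (snd (col_bump a (set c))) cs"
proof (cases rule: col_bump_cases[OF finite_set, of c a])
  case 1
  have "sorted_wrt (<) (c @ [a])"
    using assms 1 by (auto simp: sorted_wrt_append) (metis linorder_neqE_nat)
  then have "sorted_list_of_set (set (c @ [a])) = c @ [a]"
    by (rule sorted_list_of_set_strict)
  with 1 show ?thesis
    by auto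
next
  case (2 m)
  let ?c' = "map (\<lambda>b. if b = m then a else b) c"
  have "Min {b \<in> set c. a < b} = m"
    using 2 by (intro Min_eqI) auto
  then have ins: "col_ins a (c # cs) = ?c' # col_ins m cs"
    using 2 by auto
  have "sorted_wrt (<) ?c'"
    unfolding sorted_wrt_map
  proof (rule sorted_wrt_mono_rel[OF _ assms(1)])
    fix b b' assume b: "b \<in> set c" "b' \<in> set c" "b < b'"
    have "b < a" if "b' = m"
      using 2(3)[of b] b that assms(2) by (metis leD linorder_neqE_nat)
    with 2 b show "(if b = m then a else b) < (if b' = m then a else b')"
      by auto
  qed
  moreover have "set ?c' = insert a (set c - {m})"
    using 2 by auto
  ultimately have "sorted_list_of_set (insert a (set c - {m})) = ?c'"
    by (metis sorted_list_of_set_strict)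
  then show ?thesis
    unfolding ins 2(4) by simp
qed

fun col_bumps :: "nat list \<Rightarrow> nat set \<Rightarrow> nat set \<times> nat list" where
  "col_bumps [] C = (C, [])"
| "col_bumps (a # w) C =
     (fst (col_bump a (fst (col_bumps w C))),
      snd (col_bump a (fst (col_bumps w C))) @ snd (col_bumps w C))"

lemma col_bumps_append:
  "col_bumps (u @ w) C =
    (fst (col_bumps u (fst (col_bumps w C))),
     snd (col_bumps u (fst (col_bumps w C))) @ snd (col_bumps w C))"
  by (induction u) auto

lemma col_bumps_subset:
  assumes "finite C"
  shows "finite (fst (col_bumps w C)) \<and> fst (col_bumps w C) \<subseteq> C \<union> set w \<and>
    set (snd (col_bumps w C)) \<subseteq> C \<union> set w"
proof (induction w)
  case Nil
  show ?case
    using assms by simp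
next
  case (Cons a w)
  then show ?case
    using col_bump_subset[of "fst (col_bumps w C)" a] finite_subset by auto
qed

lemma foldr_col_ins_Cons:
  assumes "sorted_wrt (<) c" "distinct w" "set w \<inter> set c = {}"
  shows "foldr col_ins w (c # cs) =
    sorted_list_of_set (fst (col_bumps w (set c))) # foldr col_ins (snd (col_bumps w (set c))) cs"
  using assms(2,3)
proof (induction w)
  case Nil
  then show ?case
    using assms(1) by (simp add: sorted_list_of_set_strict)
next
  case (Cons a w)
  let ?D = "fst (col_bumps w (set c))"
  have "finite ?D" "a \<notin> ?D"
    using Cons.prems col_bumps_subset[of "set c" w] by auto
  then show ?case
    using Cons col_ins_eq_col_bump[of "sorted_list_of_set ?D" a] by simp
qed

definition wf_tableau :: "nat list list \<Rightarrow> bool" where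
  "wf_tableau T \<longleftrightarrow> (\<forall>c\<in>set T. sorted_wrt (<) c) \<and> distinct (concat T)"

lemma wf_tableau_Cons:
  "wf_tableau (c # cs) \<longleftrightarrow> sorted_wrt (<) c \<and> wf_tableau cs \<and> set c \<inter> set (concat cs) = {}"
  unfolding wf_tableau_def by (auto simp: strict_sorted_iff)

lemma wf_tableau_col_ins:
  assumes "wf_tableau T" "a \<notin> set (concat T)"
  shows "wf_tableau (col_ins a T) \<and> set (concat (col_ins a T)) = insert a (set (concat T))"
  using assms
proof (induction T arbitrary: a)
  case Nil
  then show ?case
    by (simp add: wf_tableau_def)
next
  case (Cons c cs)
  have c: "sorted_wrt (<) c" "a \<notin> set c" and cs: "wf_tableau cs" "set c \<inter> set (concat cs) = {}"
    using Cons.prems by (auto simp: wf_tableau_Cons)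
  define L where "L = sorted_list_of_set (fst (col_bump a (set c)))"
  have L: "sorted_wrt (<) L" "set L = fst (col_bump a (set c))"
    unfolding L_def using finite_subset[OF col_bump_subset(1)] by auto
  have ins: "col_ins a (c # cs) = L # foldr col_ins (snd (col_bump a (set c))) cs"
    unfolding L_def by (rule col_ins_eq_col_bump[OF c])
  show ?case
  proof (cases rule: col_bump_cases[OF finite_set, of c a])
    case 1
    with L ins Cons.prems cs show ?thesis
      by (auto simp: wf_tableau_Cons)
  next
    case (2 m)
    have "m \<notin> set (concat cs)"
      using 2 cs by auto
    with Cons.IH[OF cs(1)] L ins 2 Cons.prems cs show ?thesis
      by (auto simp: wf_tableau_Cons)
  qed
qed

lemma P_tab_Cons: "P_tab (a # w) = col_ins a (P_tab w)"
  unfolding P_tab_def by simp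

lemma P_tab_append: "P_tab (u @ w) = foldr col_ins u (P_tab w)"
  unfolding P_tab_def by simp

lemma wf_tableau_P_tab:
  "distinct w \<Longrightarrow> wf_tableau (P_tab w) \<and> set (concat (P_tab w)) = set w"
proof (induction w)
  case Nil
  then show ?case
    by (simp add: P_tab_def wf_tableau_def)
next
  case (Cons a w)
  then show ?case
    using wf_tableau_col_ins[of "P_tab w" a] by (simp add: P_tab_Cons)
qed

section \<open>Knuth relations preserve the insertion tableau\<close>

definition knuth_triple :: "nat list \<Rightarrow> nat list \<Rightarrow> bool" where
  "knuth_triple u v \<longleftrightarrow> (\<exists>x y z. x < y \<and> y < z \<and>
     (u = [y, x, z] \<and> v = [y, z, x] \<or> u = [x, z, y] \<and> v = [z, x, y]))"

lemma knuth_triple_set: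
  "knuth_triple u v \<Longrightarrow> distinct u \<and> distinct v \<and> set v = set u \<and> length v = length u"
  unfolding knuth_triple_def by auto

lemma knuth_tripleI:
  "x < y \<Longrightarrow> y < z \<Longrightarrow> knuth_triple [y, x, z] [y, z, x]"
  "x < y \<Longrightarrow> y < z \<Longrightarrow> knuth_triple [x, z, y] [z, x, y]"
  unfolding knuth_triple_def by blast+

text \<open>
  If the column has an entry q strictly between x and z, then x bumps the same entry p and z the
  same entry r (if any) whichever of the two is inserted first.
\<close>

lemma col_bumps_swap:
  assumes fin: "finite D" and q: "q \<in> D" "x < q" "q < z" and xz: "x \<notin> D" "z \<notin> D"
  obtains p where "p \<le> q" "z \<in> fst (col_bumps [z, x] D)"
    "\<And>b. b \<in> fst (col_bumps [z, x] D) \<Longrightarrow> x < b \<Longrightarrow> p < b"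
    "fst (col_bumps [x, z] D) = fst (col_bumps [z, x] D)"
    "snd (col_bumps [x, z] D) = [p] \<and> snd (col_bumps [z, x] D) = [p] \<or>
     (\<exists>r\<in>D. z < r \<and> snd (col_bumps [x, z] D) = [p, r] \<and> snd (col_bumps [z, x] D) = [r, p])"
proof -
  obtain p where p: "p \<in> D" "x < p" and p_least: "\<And>b. b \<in> D \<Longrightarrow> x < b \<Longrightarrow> p \<le> b"
    using least_above[OF q(1,2)] by blast
  have "p \<le> q" "p < z"
    using p_least q by force+
  have p_below: "\<And>b. b \<in> D \<Longrightarrow> x < b \<Longrightarrow> b \<noteq> p \<Longrightarrow> p < b"
    using p_least by (metis le_neq_implies_less)
  have x_first: "col_bump x D = (insert x (D - {p}), [p])"
    using fin p p_least by (rule col_bump_eqI)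
  show ?thesis
  proof (cases rule: col_bump_cases[OF fin, of z])
    case 1
    have "col_bump x (insert z D) = (insert x (insert z D - {p}), [p])"
      by (rule col_bump_eqI) (use fin p p_least \<open>p < z\<close> in auto)
    moreover have "col_bump z (insert x (D - {p})) = (insert z (insert x (D - {p})), [])"
      by (rule col_bump_largest) (use 1 q in auto)
    ultimately show ?thesis
      using 1 x_first \<open>p \<le> q\<close> \<open>p < z\<close> p_below p xz by (intro that[of p]) auto
  next
    case (2 r)
    have "col_bump x (insert z (D - {r})) = (insert x (insert z (D - {r}) - {p}), [p])"
      by (rule col_bump_eqI) (use fin p p_least \<open>p < z\<close> 2 in auto)
    moreover have "col_bump z (insert x (D - {p})) = (insert z (insert x (D - {p}) - {r}), [r])"
      by (rule col_bump_eqI) (use fin 2 \<open>p < z\<close> q in auto)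
    ultimately show ?thesis
      using 2 x_first \<open>p \<le> q\<close> \<open>p < z\<close> p_below p xz by (intro that[of p]) auto
  qed
qed

lemma col_bumps_knuth1_between:
  assumes fin: "finite C" and xyz: "x < y" "y < z" and q: "q \<in> C" "x < q" "q < z"
    and notin: "x \<notin> C" "z \<notin> C"
  shows "fst (col_bumps [y, x, z] C) = fst (col_bumps [y, z, x] C) \<and>
    (symclp knuth_triple)\<^sup>=\<^sup>= (snd (col_bumps [y, x, z] C)) (snd (col_bumps [y, z, x] C))"
proof -
  define D where "D = fst (col_bumps [z, x] C)"
  obtain p where "p \<le> q" "z \<in> D" and p_below: "\<And>b. b \<in> D \<Longrightarrow> x < b \<Longrightarrow> p < b"
    and same_col: "fst (col_bumps [x, z] C) = D"
    and bumps: "snd (col_bumps [x, z] C) = [p] \<and> snd (col_bumps [z, x] C) = [p] \<or>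
      (\<exists>r\<in>C. z < r \<and> snd (col_bumps [x, z] C) = [p, r] \<and> snd (col_bumps [z, x] C) = [r, p])"
    using col_bumps_swap[OF fin q notin, folded D_def] by blast
  obtain m where m: "m \<in> D" "y < m" and m_least: "\<And>b. b \<in> D \<Longrightarrow> y < b \<Longrightarrow> m \<le> b"
    using least_above[OF \<open>z \<in> D\<close> xyz(2)] by blast
  have "finite D"
    using col_bumps_subset[OF fin] unfolding D_def by blast
  then have y_last: "col_bump y D = (insert y (D - {m}), [m])"
    using m m_least by (rule col_bump_eqI)
  have "p < m" "m \<le> z"
    using p_below[OF m(1)] m_least[OF \<open>z \<in> D\<close> xyz(2)] m xyz by auto
  have u: "col_bumps [y, x, z] C =
      (fst (col_bump y D), snd (col_bump y D) @ snd (col_bumps [x, z] C))"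
    using same_col by (simp only: col_bumps.simps(2)[of y])
  have v: "col_bumps [y, z, x] C =
      (fst (col_bump y D), snd (col_bump y D) @ snd (col_bumps [z, x] C))"
    unfolding D_def by (simp only: col_bumps.simps(2)[of y])
  from bumps show ?thesis
  proof (elim disjE bexE conjE)
    fix r assume "z < r" "snd (col_bumps [x, z] C) = [p, r]" "snd (col_bumps [z, x] C) = [r, p]"
    moreover have "knuth_triple [m, p, r] [m, r, p]"
      using \<open>p < m\<close> \<open>m \<le> z\<close> \<open>z < r\<close> by (intro knuth_tripleI) auto
    ultimately show ?thesis
      unfolding u v y_last by simp
  qed (unfold u v, simp)
qed

lemma col_bumps_knuth1_below:
  assumes fin: "finite C" and xyz: "x < y" "y < z" and notin: "x \<notin> C" "y \<notin> C" "z \<notin> C"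
    and below: "\<And>b. b \<in> C \<Longrightarrow> b < x"
  shows "fst (col_bumps [y, x, z] C) = fst (col_bumps [y, z, x] C) \<and>
    (symclp knuth_triple)\<^sup>=\<^sup>= (snd (col_bumps [y, x, z] C)) (snd (col_bumps [y, z, x] C))"
proof -
  have "col_bump z C = (insert z C, [])"
    by (rule col_bump_largest) (use xyz in \<open>auto dest: below\<close>)
  moreover have "col_bump x (insert z C) = (insert x (insert z C - {z}), [z])"
    by (rule col_bump_eqI) (use fin xyz in \<open>auto dest: below\<close>)
  moreover have
    "col_bump y (insert x (insert z C - {z})) = (insert y (insert x (insert z C - {z})), [])"
    by (rule col_bump_largest) (use xyz in \<open>auto dest: below\<close>)
  moreover have "col_bump x C = (insert x C, [])"
    by (rule col_bump_largest) (auto dest: below)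
  moreover have "col_bump z (insert x C) = (insert z (insert x C), [])"
    by (rule col_bump_largest) (use xyz in \<open>auto dest: below\<close>)
  moreover have
    "col_bump y (insert z (insert x C)) = (insert y (insert z (insert x C) - {z}), [z])"
    by (rule col_bump_eqI) (use fin xyz in \<open>auto dest: below\<close>)
  ultimately show ?thesis
    using below notin xyz by auto
qed

lemma col_bumps_knuth1_gap:
  assumes fin: "finite C" and xyz: "x < y" "y < z" and notin: "x \<notin> C" "y \<notin> C" "z \<notin> C"
    and p: "p \<in> C" "x < p" "\<And>b. b \<in> C \<Longrightarrow> x < b \<Longrightarrow> p \<le> b"
    and gap: "\<And>b. b \<in> C \<Longrightarrow> x < b \<Longrightarrow> z < b"
  shows "fst (col_bumps [y, x, z] C) = fst (col_bumps [y, z, x] C) \<and>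
    (symclp knuth_triple)\<^sup>=\<^sup>= (snd (col_bumps [y, x, z] C)) (snd (col_bumps [y, z, x] C))"
proof -
  have "z < p"
    using gap p(1,2) by blast
  have x_first: "col_bump x C = (insert x (C - {p}), [p])"
    using fin p by (rule col_bump_eqI)
  have z_first: "col_bump z C = (insert z (C - {p}), [p])"
    by (rule col_bump_eqI) (use fin p xyz \<open>z < p\<close> in auto)
  have x_second: "col_bump x (insert z (C - {p})) = (insert x (insert z (C - {p}) - {z}), [z])"
    by (rule col_bump_eqI) (use fin xyz in \<open>auto dest: gap\<close>)
  let ?E = "insert x (insert z (C - {p}) - {z})"
  have "finite (insert x (C - {p}))"
    using fin by simp
  then show ?thesis
  proof (cases rule: col_bump_cases[of _ z])
    case 1
    then have below: "\<And>b. b \<in> C \<Longrightarrow> b \<noteq> p \<Longrightarrow> b < y"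
      using gap xyz notin(2) by (metis DiffI insertCI linorder_neqE_nat order.strict_trans singletonD)
    have "col_bump y ?E = (insert y ?E, [])"
      by (rule col_bump_largest) (use xyz in \<open>auto dest: below\<close>)
    moreover have "col_bump y (insert z (insert x (C - {p}))) =
        (insert y (insert z (insert x (C - {p})) - {z}), [z])"
      by (rule col_bump_eqI) (use fin xyz in \<open>auto dest: below\<close>)
    ultimately show ?thesis
      using 1 x_first z_first x_second notin xyz by auto
  next
    case (2 p')
    have "p < p'"
      using 2(1,2) p(3)[of p'] \<open>z < p\<close> xyz by auto
    have "col_bump y ?E = (insert y (?E - {p'}), [p'])"
      by (rule col_bump_eqI) (use fin 2 gap xyz in auto)
    moreover have "col_bump y (insert z (insert x (C - {p}) - {p'})) =
        (insert y (insert z (insert x (C - {p}) - {p'}) - {z}), [z])"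
      by (rule col_bump_eqI) (use fin 2 xyz in \<open>auto dest: gap\<close>)
    moreover have "knuth_triple [z, p', p] [p', z, p]"
      using \<open>z < p\<close> \<open>p < p'\<close> by (rule knuth_tripleI)
    ultimately show ?thesis
      using 2 x_first z_first x_second notin xyz by auto
  qed
qed

lemma gap_position_cases:
  fixes C :: "nat set"
  assumes "x \<notin> C" "z \<notin> C"
  obtains (between) q where "q \<in> C" "x < q" "q < z"
  | (below) "\<And>b. b \<in> C \<Longrightarrow> b < x"
  | (gap) p where "p \<in> C" "x < p" "\<And>b. b \<in> C \<Longrightarrow> x < b \<Longrightarrow> p \<le> b"
      "\<And>b. b \<in> C \<Longrightarrow> x < b \<Longrightarrow> z < b"
proof (cases "\<exists>b\<in>C. x < b")
  case True
  then obtain p where "p \<in> C" "x < p" "\<And>b. b \<in> C \<Longrightarrow> x < b \<Longrightarrow> p \<le> b"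
    using least_above by blast
  with assms(2) that(1,3) show ?thesis
    by (metis linorder_neqE_nat)
next
  case False
  with assms(1) that(2) show ?thesis
    by (metis linorder_neqE_nat)
qed

lemma col_bumps_knuth1:
  assumes fin: "finite C" and xyz: "x < y" "y < z" and notin: "x \<notin> C" "y \<notin> C" "z \<notin> C"
  shows "fst (col_bumps [y, x, z] C) = fst (col_bumps [y, z, x] C) \<and>
    (symclp knuth_triple)\<^sup>=\<^sup>= (snd (col_bumps [y, x, z] C)) (snd (col_bumps [y, z, x] C))"
  using notin(1,3)
proof (cases rule: gap_position_cases)
  case (between q)
  then show ?thesis
    using col_bumps_knuth1_between[OF fin xyz _ _ _ notin(1,3)] by blast
next
  case below
  then show ?thesis
    using col_bumps_knuth1_below[OF fin xyz notin] by blast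
next
  case (gap p)
  then show ?thesis
    using col_bumps_knuth1_gap[OF fin xyz notin] by blast
qed

lemma col_bumps_knuth2:
  assumes fin: "finite C" and xyz: "x < y" "y < z" and notin: "x \<notin> C" "y \<notin> C" "z \<notin> C"
  shows "fst (col_bumps [x, z, y] C) = fst (col_bumps [z, x, y] C) \<and>
    (symclp knuth_triple)\<^sup>=\<^sup>= (snd (col_bumps [x, z, y] C)) (snd (col_bumps [z, x, y] C))"
proof -
  define D where "D = fst (col_bump y C)"
  have D: "finite D" "y \<in> D" "x \<notin> D" "z \<notin> D"
    using col_bump_subset[OF fin, of y] fin notin xyz finite_subset
    by (cases rule: col_bump_cases[OF fin, of y]; auto simp: D_def)+
  obtain p where "p \<le> y" "z \<in> fst (col_bumps [z, x] D)"
    "\<And>b. b \<in> fst (col_bumps [z, x] D) \<Longrightarrow> x < b \<Longrightarrow> p < b"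
    and same_col: "fst (col_bumps [x, z] D) = fst (col_bumps [z, x] D)"
    and bumps: "snd (col_bumps [x, z] D) = [p] \<and> snd (col_bumps [z, x] D) = [p] \<or>
      (\<exists>r\<in>D. z < r \<and> snd (col_bumps [x, z] D) = [p, r] \<and> snd (col_bumps [z, x] D) = [r, p])"
    using col_bumps_swap[OF D(1,2) xyz D(3,4)] by blast
  have u: "col_bumps [x, z, y] C =
      (fst (col_bumps [x, z] D), snd (col_bumps [x, z] D) @ snd (col_bump y C))"
    using col_bumps_append[of "[x, z]" "[y]" C] unfolding D_def by simp
  have v: "col_bumps [z, x, y] C =
      (fst (col_bumps [z, x] D), snd (col_bumps [z, x] D) @ snd (col_bump y C))"
    using col_bumps_append[of "[z, x]" "[y]" C] unfolding D_def by simp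
  from bumps show ?thesis
  proof (elim disjE bexE conjE)
    fix r assume r: "r \<in> D" "z < r" and
      bumped: "snd (col_bumps [x, z] D) = [p, r]" "snd (col_bumps [z, x] D) = [r, p]"
    show ?thesis
    proof (cases rule: col_bump_cases[OF fin, of y])
      case 1
      then have "r \<in> C"
        using r xyz unfolding D_def by auto
      with 1 r xyz show ?thesis
        by (meson less_trans)
    next
      case (2 q)
      then have "q < r"
        using r xyz unfolding D_def by (auto simp: le_neq_implies_less)
      then have "knuth_triple [p, r, q] [r, p, q]"
        using \<open>p \<le> y\<close> 2 by (intro knuth_tripleI) auto
      then show ?thesis
        unfolding u v bumped 2(4) same_col by simp
    qed
  qed (unfold u v same_col, simp)
qed

lemma col_bumps_knuth_triple:
  assumes "knuth_triple u v" "finite C" "set u \<inter> C = {}"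
  shows "fst (col_bumps u C) = fst (col_bumps v C) \<and>
    (symclp knuth_triple)\<^sup>=\<^sup>= (snd (col_bumps u C)) (snd (col_bumps v C))"
proof -
  obtain x y z where xyz: "x < y" "y < z"
    and uv: "u = [y, x, z] \<and> v = [y, z, x] \<or> u = [x, z, y] \<and> v = [z, x, y]"
    using assms(1) unfolding knuth_triple_def by blast
  have notin: "x \<notin> C" "y \<notin> C" "z \<notin> C"
    using uv assms(3) by auto
  from uv show ?thesis
    using col_bumps_knuth1[OF assms(2) xyz notin] col_bumps_knuth2[OF assms(2) xyz notin] by blast
qed

lemma foldr_col_ins_knuth_triple:
  assumes "knuth_triple u v" "wf_tableau T" "set u \<inter> set (concat T) = {}"
  shows "foldr col_ins u T = foldr col_ins v T"
  using assms
proof (induction T arbitrary: u v)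
  case Nil
  then show ?case
    unfolding knuth_triple_def by (auto simp: Collect_conv_if conj_disj_distribR Collect_disj_eq)
next
  case (Cons c cs)
  have c: "sorted_wrt (<) c" "wf_tableau cs" "set c \<inter> set (concat cs) = {}"
    using Cons.prems(2) by (auto simp: wf_tableau_Cons)
  have uv: "distinct u" "distinct v" "set v = set u" "set u \<inter> set c = {}"
    using knuth_triple_set[OF Cons.prems(1)] Cons.prems(3) by auto
  let ?bu = "snd (col_bumps u (set c))" and ?bv = "snd (col_bumps v (set c))"
  have col: "fst (col_bumps u (set c)) = fst (col_bumps v (set c))"
    and rel: "(symclp knuth_triple)\<^sup>=\<^sup>= ?bu ?bv"
    using col_bumps_knuth_triple[OF Cons.prems(1) finite_set] uv(4) by blast+
  have "set ?bu \<inter> set (concat cs) = {}"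
    using col_bumps_subset[of "set c" u] c(3) Cons.prems(3) by auto
  with rel have "foldr col_ins ?bu cs = foldr col_ins ?bv cs"
    using Cons.IH[OF _ c(2)] knuth_triple_set by (auto elim!: symclpE)
  then show ?case
    using foldr_col_ins_Cons[OF c(1)] uv col by simp
qed

definition knuth_step :: "nat list \<Rightarrow> nat list \<Rightarrow> bool" where
  "knuth_step u v \<longleftrightarrow> (\<exists>p s t t'. knuth_triple t t' \<and> u = p @ t @ s \<and> v = p @ t' @ s)"

abbreviation knuth_equiv :: "nat list \<Rightarrow> nat list \<Rightarrow> bool" where
  "knuth_equiv \<equiv> equivclp knuth_step"

lemma knuth_stepI: "knuth_triple t t' \<Longrightarrow> knuth_step (p @ t @ s) (p @ t' @ s)"
  unfolding knuth_step_def by blast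

lemma knuth_step_append: "knuth_step u v \<Longrightarrow> knuth_step (p @ u @ s) (p @ v @ s)"
  unfolding knuth_step_def by (metis append.assoc)

lemma knuth_equiv_append: "knuth_equiv u v \<Longrightarrow> knuth_equiv (p @ u @ s) (p @ v @ s)"
proof (induction rule: equivclp_induct)
  case (step v w)
  then show ?case
    by (meson equivclp_into_equivclp knuth_step_append)
qed simp

lemma knuth_step_set_length: "knuth_step u v \<Longrightarrow> set u = set v \<and> length u = length v"
  unfolding knuth_step_def by (auto dest: knuth_triple_set)

lemma knuth_equiv_set_length: "knuth_equiv u v \<Longrightarrow> set u = set v \<and> length u = length v"
proof (induction rule: equivclp_induct)
  case (step v w)
  then show ?case
    by (auto dest: knuth_step_set_length)
qed simp

lemma knuth_equiv_distinct: "knuth_equiv u v \<Longrightarrow> distinct u \<longleftrightarrow> distinct v"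
  using knuth_equiv_set_length by (metis card_distinct distinct_card)

lemma P_tab_knuth_step:
  assumes "knuth_step u v" "distinct u"
  shows "P_tab u = P_tab v"
proof -
  obtain p s t t' where tt': "knuth_triple t t'" and uv: "u = p @ t @ s" "v = p @ t' @ s"
    using assms(1) unfolding knuth_step_def by blast
  have "wf_tableau (P_tab s)" "set t \<inter> set (concat (P_tab s)) = {}"
    using wf_tableau_P_tab[of s] assms(2) uv by auto
  then have "foldr col_ins t (P_tab s) = foldr col_ins t' (P_tab s)"
    by (rule foldr_col_ins_knuth_triple[OF tt'])
  then show ?thesis
    unfolding uv P_tab_append by simp
qed

lemma P_tab_knuth_equiv:
  assumes "knuth_equiv u v" "distinct u"
  shows "P_tab u = P_tab v"
  using assms(1)
proof (induction rule: equivclp_induct)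
  case (step v w)
  have "distinct v" "distinct w"
    using assms(2) knuth_equiv_distinct step.hyps(1) equivclp_into_equivclp[OF step.hyps] by blast+
  with step.IH step.hyps(2) show ?case
    by (metis P_tab_knuth_step)
qed simp

section \<open>Row insertion on reading words\<close>

lemma knuth_equiv_small_past_row:
  "sorted_wrt (<) C \<Longrightarrow> a < p \<Longrightarrow> (\<forall>c\<in>set C. p < c) \<Longrightarrow>
    knuth_equiv (p # C @ [a]) (p # a # C)"
proof (induction C arbitrary: p)
  case (Cons c C)
  have "knuth_equiv (c # C @ [a]) (c # a # C)"
    using Cons.IH[of c] Cons.prems by force
  then have "knuth_equiv (p # c # C @ [a]) (p # c # a # C)"
    using knuth_equiv_append[of _ _ "[p]" "[]"] by simp
  moreover have "knuth_step ([] @ [p, a, c] @ C) ([] @ [p, c, a] @ C)"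
    using Cons.prems by (intro knuth_stepI knuth_tripleI) auto
  then have "knuth_equiv (p # c # a # C) (p # a # c # C)"
    by (simp add: converse_r_into_equivclp)
  ultimately have "knuth_equiv (p # c # C @ [a]) (p # a # c # C)"
    by (rule equivclp_trans)
  then show ?case
    by simp
qed simp

lemma knuth_equiv_large_past_row:
  "sorted_wrt (<) A \<Longrightarrow> (\<forall>c\<in>set A. c < y) \<Longrightarrow> y < b \<Longrightarrow>
    knuth_equiv (A @ [b, y]) (b # A @ [y])"
proof (induction A arbitrary: y rule: rev_induct)
  case (snoc c A)
  have "knuth_step (A @ [c, b, y] @ []) (A @ [b, c, y] @ [])"
    using snoc.prems by (intro knuth_stepI knuth_tripleI) auto
  then have "knuth_equiv (A @ [c, b, y]) (A @ [b, c, y])"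
    by (simp add: r_into_equivclp)
  moreover have "knuth_equiv (A @ [b, c]) (b # A @ [c])"
    using snoc by (auto simp: sorted_wrt_append)
  then have "knuth_equiv (A @ [b, c, y]) (b # A @ [c, y])"
    using knuth_equiv_append[of "A @ [b, c]" "b # A @ [c]" "[]" "[y]"] by simp
  ultimately have "knuth_equiv (A @ [c, b, y]) (b # A @ [c, y])"
    by (rule equivclp_trans)
  then show ?case
    by simp
qed simp

lemma knuth_equiv_row_insert:
  assumes "sorted_wrt (<) (A @ [b] @ C)" "\<forall>c\<in>set A. c < a" "a < b"
  shows "knuth_equiv (A @ [b] @ C @ [a]) ([b] @ A @ [a] @ C)"
proof -
  have "knuth_equiv (b # C @ [a]) (b # a # C)"
    using assms by (intro knuth_equiv_small_past_row) (auto simp: sorted_wrt_append)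
  then have "knuth_equiv (A @ b # C @ [a]) (A @ b # a # C)"
    using knuth_equiv_append[of _ _ A "[]"] by simp
  moreover have "knuth_equiv (A @ [b, a]) (b # A @ [a])"
    using assms by (intro knuth_equiv_large_past_row) (auto simp: sorted_wrt_append)
  then have "knuth_equiv (A @ b # a # C) (b # A @ a # C)"
    using knuth_equiv_append[of "A @ [b, a]" "b # A @ [a]" "[]" C] by simp
  ultimately have "knuth_equiv (A @ b # C @ [a]) (b # A @ a # C)"
    by (rule equivclp_trans)
  then show ?thesis
    by simp
qed

section \<open>Reading words of staircase tableaux\<close>

text \<open>
  Entry box n i j sits in row i and column j of the staircase, whose column j has n - j cells.
  For j not in B (lift B j = 1), column j of the tableau encoded by B has lost its least entry,
  so its row i holds the staircase entry of row i + 1. Reading words list the rows from the last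
  to the first.
\<close>

definition box :: "nat \<Rightarrow> nat \<Rightarrow> nat \<Rightarrow> nat" where
  "box n i j = j * n + i + 1"

definition lift :: "nat set \<Rightarrow> nat \<Rightarrow> nat" where
  "lift B j = (if j \<in> B then 0 else 1)"

definition row_entries :: "nat \<Rightarrow> nat set \<Rightarrow> nat \<Rightarrow> nat list \<Rightarrow> nat list" where
  "row_entries n B i js = map (\<lambda>j. box n (i + lift B j) j) (filter (\<lambda>j. i + j + lift B j < n) js)"

definition stair_rows :: "nat \<Rightarrow> nat set \<Rightarrow> nat list \<Rightarrow> nat list" where
  "stair_rows n B is = concat (map (\<lambda>i. row_entries n B i [0..<n]) (rev is))"

abbreviation stair_word :: "nat \<Rightarrow> nat set \<Rightarrow> nat list" where
  "stair_word n B \<equiv> stair_rows n B [0..<n]"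

lemma box_less: "j < j' \<Longrightarrow> i < n \<Longrightarrow> box n i j < box n i' j'"
proof -
  assume "j < j'" "i < n"
  then have "j * n + n \<le> j' * n"
    using mult_le_mono1[of "Suc j" j' n] by simp
  with \<open>i < n\<close> show ?thesis
    unfolding box_def by linarith
qed

lemma box_inj:
  assumes "i < n" "i' < n" "box n i j = box n i' j'"
  shows "i = i' \<and> j = j'"
proof -
  have eq: "i + j * n = i' + j' * n"
    using assms(3) unfolding box_def by simp
  moreover have "(i + j * n) mod n = i" "(i' + j' * n) mod n = i'"
    using assms(1,2) by simp_all
  ultimately have "i = i'"
    by simp
  with eq assms(1) show ?thesis
    by simp
qed

lemma box_first_row_less:
  "1 \<le> n \<Longrightarrow> a \<in> {1..n} \<Longrightarrow> b \<in> {1..n} \<Longrightarrow> box n 0 (a - 1) < box n 0 (b - 1) \<longleftrightarrow> a < b"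
  unfolding box_def by auto

lemma row_entries_append: "row_entries n B i (js @ ks) = row_entries n B i js @ row_entries n B i ks"
  unfolding row_entries_def by simp

lemma row_entries_insert_other:
  assumes "j \<notin> set js"
  shows "row_entries n (insert j B) i js = row_entries n B i js"
proof -
  have "\<And>k. k \<in> set js \<Longrightarrow> lift (insert j B) k = lift B k"
    using assms by (auto simp: lift_def)
  then show ?thesis
    unfolding row_entries_def by (intro map_cong filter_cong) auto
qed

lemma row_entries_sorted: "sorted_wrt (<) (row_entries n B i [0..<n])"
  unfolding row_entries_def sorted_wrt_map
  by (rule sorted_wrt_mono_rel[OF _ sorted_wrt_filter[OF sorted_wrt_upt]]) (auto intro: box_less)

lemma row_entries_less_box:
  "x \<in> set (row_entries n B i [0..<j]) \<Longrightarrow> j < n \<Longrightarrow> x < box n i' j"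
  unfolding row_entries_def by (auto intro: box_less)

lemma set_row_entries:
  "set (row_entries n B i js) = {box n (i + lift B j) j | j. j \<in> set js \<and> i + j + lift B j < n}"
  unfolding row_entries_def by auto

lemma row_entries_disjoint:
  assumes "x \<in> set (row_entries n B i js)" "x \<in> set (row_entries n B i' js')"
  shows "i = i'"
proof -
  obtain k k' where k: "x = box n (i + lift B k) k" "i + k + lift B k < n"
    and k': "x = box n (i' + lift B k') k'" "i' + k' + lift B k' < n"
    using assms unfolding set_row_entries by blast
  have "i + lift B k < n" "i' + lift B k' < n" "box n (i + lift B k) k = box n (i' + lift B k') k'"
    using k k' by auto
  then have "i + lift B k = i' + lift B k'" "k = k'"
    by (blast dest: box_inj)+
  then show ?thesis
    by simp
qed

lemma stair_rows_Nil: "stair_rows n B [] = []"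
  unfolding stair_rows_def by simp

lemma stair_rows_Cons: "stair_rows n B (i # is) = stair_rows n B is @ row_entries n B i [0..<n]"
  unfolding stair_rows_def by simp

lemma stair_rows_append: "stair_rows n B (is @ js) = stair_rows n B js @ stair_rows n B is"
  unfolding stair_rows_def by simp

lemma stair_rows_upt_Suc:
  "m < n \<Longrightarrow> stair_rows n B [m..<n] = stair_rows n B [Suc m..<n] @ row_entries n B m [0..<n]"
  by (simp add: upt_conv_Cons stair_rows_Cons)

lemma stair_row_split:
  assumes "j < n" "j \<notin> B"
  shows "row_entries n B i [0..<n] = row_entries n B i [0..<j] @
      (if i + j + 1 < n then [box n (i + 1) j] else []) @ row_entries n B i [Suc j..<n]"
    "row_entries n (insert j B) i [0..<n] = row_entries n B i [0..<j] @
      (if i + j < n then [box n i j] else []) @ row_entries n B i [Suc j..<n]"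
proof -
  have split: "[0..<n] = [0..<j] @ [j] @ [Suc j..<n]"
    using assms(1) upt_add_eq_append[of 0 j "n - j"] upt_conv_Cons[of j n] by simp
  show "row_entries n B i [0..<n] = row_entries n B i [0..<j] @
      (if i + j + 1 < n then [box n (i + 1) j] else []) @ row_entries n B i [Suc j..<n]"
    unfolding split row_entries_append using assms(2) by (simp add: row_entries_def lift_def)
  show "row_entries n (insert j B) i [0..<n] = row_entries n B i [0..<j] @
      (if i + j < n then [box n i j] else []) @ row_entries n B i [Suc j..<n]"
    unfolding split row_entries_append
    by (simp add: row_entries_insert_other) (simp add: row_entries_def lift_def)
qed

lemma stair_chain:
  assumes j: "j < n" "j \<notin> B" and "m + j < n"
  shows "knuth_equiv (stair_word n B @ [box n 0 j])
    (stair_rows n B [m..<n] @ [box n m j] @ stair_rows n (insert j B) [0..<m])"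
  using assms(3)
proof (induction m)
  case 0
  then show ?case
    by (simp add: stair_rows_Nil)
next
  case (Suc m)
  let ?A = "row_entries n B m [0..<j]" and ?C = "row_entries n B m [Suc j..<n]"
  let ?X = "stair_rows n B [Suc m..<n]" and ?Y = "stair_rows n (insert j B) [0..<m]"
  have rows: "row_entries n B m [0..<n] = ?A @ [box n (Suc m) j] @ ?C"
    "row_entries n (insert j B) m [0..<n] = ?A @ [box n m j] @ ?C"
    using stair_row_split[OF j, of m] Suc.prems by simp_all
  have row_step: "knuth_equiv (?A @ [box n (Suc m) j] @ ?C @ [box n m j])
      ([box n (Suc m) j] @ ?A @ [box n m j] @ ?C)"
  proof (rule knuth_equiv_row_insert)
    show "sorted_wrt (<) (?A @ [box n (Suc m) j] @ ?C)"
      using row_entries_sorted[of n B m] unfolding rows(1) .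
    show "\<forall>c\<in>set ?A. c < box n m j"
      using row_entries_less_box j(1) by blast
  qed (simp add: box_def)
  have "knuth_equiv (?X @ row_entries n B m [0..<n] @ [box n m j] @ ?Y)
      (?X @ [box n (Suc m) j] @ row_entries n (insert j B) m [0..<n] @ ?Y)"
    using knuth_equiv_append[OF row_step, of ?X ?Y] unfolding rows by simp
  with Suc have "knuth_equiv (stair_word n B @ [box n 0 j])
      (?X @ [box n (Suc m) j] @ row_entries n (insert j B) m [0..<n] @ ?Y)"
    using equivclp_trans stair_rows_upt_Suc[of m n B] by fastforce
  then show ?case
    by (simp add: stair_rows_append stair_rows_Cons stair_rows_Nil)
qed

lemma stair_word_insert:
  assumes j: "j < n" "j \<notin> B"
  shows "knuth_equiv (stair_word n B @ [box n 0 j]) (stair_word n (insert j B))"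
proof -
  define L where "L = n - Suc j"
  have L: "L < n" "L + j + 1 = n"
    using j(1) unfolding L_def by auto
  have high: "row_entries n (insert j B) i [0..<n] = row_entries n B i [0..<n]" if "L < i" for i
  proof -
    have "row_entries n B i [Suc j..<n] = []"
      using that L unfolding row_entries_def by (auto simp: filter_empty_conv)
    then show ?thesis
      using stair_row_split[OF j, of i] that L by simp
  qed
  have top: "row_entries n (insert j B) L [0..<n] = row_entries n B L [0..<n] @ [box n L j]"
  proof -
    have "row_entries n B L [Suc j..<n] = []"
      using L unfolding row_entries_def by (auto simp: filter_empty_conv)
    then show ?thesis
      using stair_row_split[OF j, of L] L by simp
  qed
  have "stair_rows n (insert j B) [Suc L..<n] = stair_rows n B [Suc L..<n]"
    unfolding stair_rows_def using high by (intro arg_cong[where f = concat] map_cong) auto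
  then have upper: "stair_rows n B [L..<n] @ [box n L j] = stair_rows n (insert j B) [L..<n]"
    using stair_rows_upt_Suc[OF L(1)] top by simp
  have split: "stair_word n (insert j B) =
      stair_rows n (insert j B) [L..<n] @ stair_rows n (insert j B) [0..<L]"
    using upt_add_eq_append[of 0 L "n - L"] L(1) by (simp add: stair_rows_append)
  have "knuth_equiv (stair_word n B @ [box n 0 j])
      ((stair_rows n B [L..<n] @ [box n L j]) @ stair_rows n (insert j B) [0..<L])"
    using stair_chain[OF j] L by simp
  then show ?thesis
    unfolding upper split .
qed

lemma stair_word_fill:
  "distinct s \<Longrightarrow> set s \<subseteq> {0..<n} \<Longrightarrow>
    knuth_equiv (stair_word n {} @ map (box n 0) s) (stair_word n (set s))"
proof (induction s rule: rev_induct)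
  case (snoc j s)
  then have IH: "knuth_equiv (stair_word n {} @ map (box n 0) s) (stair_word n (set s))"
    by simp
  have "knuth_equiv (stair_word n {} @ map (box n 0) s @ [box n 0 j])
      (stair_word n (set s) @ [box n 0 j])"
    using knuth_equiv_append[OF IH, of "[]" "[box n 0 j]"] by simp
  moreover have "knuth_equiv (stair_word n (set s) @ [box n 0 j]) (stair_word n (insert j (set s)))"
    using snoc.prems by (intro stair_word_insert) auto
  ultimately show ?case
    using equivclp_trans by fastforce
qed simp

lemma stair_word_perm:
  assumes "is_perm n x"
  shows "knuth_equiv (stair_word n {} @ map (\<lambda>k. box n 0 (k - 1)) x) (stair_word n {0..<n})"
proof -
  let ?s = "map (\<lambda>k. k - 1) x"
  have "inj_on (\<lambda>k. k - 1) (set x)"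
    using assms by (auto simp: is_perm_def inj_on_def)
  then have "distinct ?s"
    using assms by (simp add: is_perm_def distinct_map)
  moreover have "set x = {1..<Suc n}"
    using assms by (simp add: is_perm_def atLeastLessThanSuc_atLeastAtMost)
  then have "set ?s = {0..<n}"
    by (simp add: image_minus_const_atLeastLessThan_nat)
  ultimately show ?thesis
    using stair_word_fill[of ?s n] by (simp add: comp_def)
qed

lemma distinct_stair_rows: "distinct is \<Longrightarrow> distinct (stair_rows n B is)"
proof (induction "is")
  case (Cons i "is")
  then have "set (stair_rows n B is) \<inter> set (row_entries n B i [0..<n]) = {}"
    by (auto simp: stair_rows_def dest: row_entries_disjoint)
  with Cons row_entries_sorted[of n B i] show ?case
    by (simp add: stair_rows_Cons strict_sorted_iff)
qed (simp add: stair_rows_Nil)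

lemma set_stair_rows: "set (stair_rows n B is) \<subseteq> {1..n * n}"
proof -
  have "box n h j \<le> n * n" if "h + j < n" for h j
  proof -
    have "j * n + n \<le> n * n"
      using mult_le_mono1[of "Suc j" n n] that by simp
    then show ?thesis
      using that unfolding box_def by simp
  qed
  then show ?thesis
    unfolding stair_rows_def by (force simp: set_row_entries box_def)
qed

section \<open>Order patterns and padding\<close>

lemma pattern_last_append_map:
  assumes "\<And>a b. a \<in> set x \<Longrightarrow> b \<in> set x \<Longrightarrow> f a < f b \<longleftrightarrow> a < b"
  shows "pattern_last x (p @ map f x)"
  unfolding pattern_last_def by (auto simp: nth_append assms)

lemma length_is_perm: "is_perm N v \<Longrightarrow> length v = N"
  unfolding is_perm_def by (metis card_atLeastAtMost diff_Suc_1 distinct_card)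

lemma knuth_equiv_pad_perm:
  assumes "knuth_equiv u v" "distinct u" "set u \<subseteq> {1..N}"
  obtains F where "is_perm N (F @ u)" "is_perm N (F @ v)" "P_tab (F @ u) = P_tab (F @ v)"
proof -
  let ?F = "filter (\<lambda>m. m \<notin> set u) [1..<Suc N]"
  have "distinct v" "set v = set u"
    using knuth_equiv_distinct[OF assms(1)] knuth_equiv_set_length[OF assms(1)] assms(2) by auto
  with assms(2,3) have "is_perm N (?F @ u)" "is_perm N (?F @ v)"
    unfolding is_perm_def by auto
  moreover have "P_tab (?F @ u) = P_tab (?F @ v)"
    using P_tab_knuth_equiv[OF assms(1,2)] by (simp add: P_tab_append)
  ultimately show ?thesis
    using that by blast
qed

theorem theorem2p4:
  fixes n :: nat and x y :: "nat list"
  assumes "n \<ge> 1" and "is_perm n x" and "is_perm n y"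
  shows "\<exists>N \<ge> n. \<exists>v w. is_perm N v \<and> is_perm N w \<and> P_tab v = P_tab w \<and>
           (\<forall>i < N - n. v ! i = w ! i) \<and> pattern_last x v \<and> pattern_last y w"
proof -
  let ?f = "\<lambda>k. box n 0 (k - 1)" and ?U = "stair_word n {}"
  have equiv: "knuth_equiv (?U @ map ?f x) (stair_word n {0..<n})"
    "knuth_equiv (?U @ map ?f y) (stair_word n {0..<n})"
    using stair_word_perm assms(2,3) by blast+
  then have "knuth_equiv (?U @ map ?f x) (?U @ map ?f y)"
    by (metis equivclp_sym equivclp_trans)
  moreover have "distinct (?U @ map ?f x)" "set (?U @ map ?f x) \<subseteq> {1..n * n}"
    using knuth_equiv_distinct[OF equiv(1)] knuth_equiv_set_length[OF equiv(1)]
      distinct_stair_rows[of "[0..<n]" n "{0..<n}"] set_stair_rows[of n "{0..<n}" "[0..<n]"]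
    by simp_all
  ultimately obtain F where perm: "is_perm (n * n) (F @ ?U @ map ?f x)"
    "is_perm (n * n) (F @ ?U @ map ?f y)" and P: "P_tab (F @ ?U @ map ?f x) = P_tab (F @ ?U @ map ?f y)"
    by (rule knuth_equiv_pad_perm)
  have "length (F @ ?U) = n * n - n"
    using length_is_perm[OF perm(1)] length_is_perm[OF assms(2)] by simp
  then have prefix: "\<forall>i < n * n - n. (F @ ?U @ map ?f x) ! i = (F @ ?U @ map ?f y) ! i"
    by (simp add: nth_append flip: append_assoc)
  have "pattern_last x ((F @ ?U) @ map ?f x)" "pattern_last y ((F @ ?U) @ map ?f y)"
    using assms box_first_row_less[OF assms(1)] unfolding is_perm_def
    by (metis pattern_last_append_map)+
  then have pattern: "pattern_last x (F @ ?U @ map ?f x)" "pattern_last y (F @ ?U @ map ?f y)"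
    by simp_all
  have "n \<le> n * n"
    using assms(1) by simp
  with perm P prefix pattern show ?thesis
    by blast
qed

end
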